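(* There exist a connected graph $G$ of order $n\geq 2$ and a graph $H$ with connected components $H_1,\dots,H_k$ such that $\chi_L(G\odot H)=\chi_L(G)+\sum_{t=1}^{k}\bigl(\chi_L(H_t+K_1)-1\bigr)$.
   Context: All graphs are finite and simple. A $k$-coloring of a connected graph $G$ is a map $c:V(G)\to\{1,\dots,k\}$ with $c(u)\neq c(v)$ for adjacent $u,v$; it induces the partition $\Pi=\{C_1,\dots,C_k\}$ into color classes $C_i=c^{-1}(i)$. The color code of $v$ is $c_\Pi(v)=(d(v,C_1),\dots,d(v,C_k))$ with $d(v,C_i)=\min\{d(v,x): x\in C_i\}$ (graph distance). $c$ is a locating coloring if distinct vertices have distinct color codes; the locating-chromatic number $\chi_L(G)$ is the least $k$ for which a locating $k$-coloring exists. The corona product $G\odot H$ of a graph $G$ with vertex set $\{a_1,\dots,a_n\}$ and a graph $H$ is obtained from one copy of $G$ and $n$ disjoint copies of $H$ by joining $a_i$ to every vertex of the $i$-th copy of $H$. For a graph $F$, $F+K_1$ denotes the join of $F$ with a single new vertex adjacent to all vertices of $F$. *)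

theory Defs
  imports Main
begin

text \<open>A graph is a pair (V, E) of a vertex set and a set of ordered pairs (edges stored
  in both directions). Finite simple graphs: finite V, E symmetric, irreflexive, within V.\<close>

type_synonym 'a graph = "'a set \<times> ('a \<times> 'a) set"

definition simple_graph :: "'a graph \<Rightarrow> bool" where
  "simple_graph G \<longleftrightarrow> finite (fst G) \<and> snd G \<subseteq> fst G \<times> fst G
     \<and> (\<forall>u v. (u, v) \<in> snd G \<longrightarrow> (v, u) \<in> snd G)
     \<and> (\<forall>u. (u, u) \<notin> snd G)"

inductive walk :: "'a graph \<Rightarrow> 'a \<Rightarrow> 'a \<Rightarrow> nat \<Rightarrow> bool" for G where
  walk_nil: "u \<in> fst G \<Longrightarrow> walk G u u 0"
| walk_cons: "(u, w) \<in> snd G \<Longrightarrow> walk G w v n \<Longrightarrow> walk G u v (Suc n)"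

definition connected_graph :: "'a graph \<Rightarrow> bool" where
  "connected_graph G \<longleftrightarrow> fst G \<noteq> {} \<and> (\<forall>u\<in>fst G. \<forall>v\<in>fst G. \<exists>n. walk G u v n)"

text \<open>Graph distance (only meaningful within a connected graph).\<close>
definition gdist :: "'a graph \<Rightarrow> 'a \<Rightarrow> 'a \<Rightarrow> nat" where
  "gdist G u v = (LEAST n. walk G u v n)"

definition setdist :: "'a graph \<Rightarrow> 'a \<Rightarrow> 'a set \<Rightarrow> nat" where
  "setdist G v C = Min ((\<lambda>x. gdist G v x) ` C)"

definition color_class :: "'a graph \<Rightarrow> ('a \<Rightarrow> nat) \<Rightarrow> nat \<Rightarrow> 'a set" where
  "color_class G c i = {v \<in> fst G. c v = i}"

definition color_code :: "'a graph \<Rightarrow> ('a \<Rightarrow> nat) \<Rightarrow> nat \<Rightarrow> 'a \<Rightarrow> nat list" where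
  "color_code G c k v = map (\<lambda>i. setdist G v (color_class G c i)) [1..<k+1]"

definition k_coloring :: "'a graph \<Rightarrow> ('a \<Rightarrow> nat) \<Rightarrow> nat \<Rightarrow> bool" where
  "k_coloring G c k \<longleftrightarrow> (\<forall>v\<in>fst G. c v \<in> {1..k})
     \<and> (\<forall>u v. (u, v) \<in> snd G \<longrightarrow> c u \<noteq> c v)
     \<and> (\<forall>i\<in>{1..k}. color_class G c i \<noteq> {})"

definition locating_coloring :: "'a graph \<Rightarrow> ('a \<Rightarrow> nat) \<Rightarrow> nat \<Rightarrow> bool" where
  "locating_coloring G c k \<longleftrightarrow> k_coloring G c k \<and> inj_on (color_code G c k) (fst G)"

definition locating_chromatic_number :: "'a graph \<Rightarrow> nat" where
  "locating_chromatic_number G = (LEAST k. \<exists>c. locating_coloring G c k)"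

text \<open>Corona product: vertex (a, None) is a of G, (a, Some x) is the copy of x in the copy of H at a.\<close>
definition corona :: "'a graph \<Rightarrow> 'b graph \<Rightarrow> ('a \<times> 'b option) graph" where
  "corona G H =
    ((fst G \<times> {None}) \<union> (fst G \<times> Some ` fst H),
     {((a, None), (b, None)) | a b. (a, b) \<in> snd G}
     \<union> {((a, Some x), (a, Some y)) | a x y. a \<in> fst G \<and> (x, y) \<in> snd H}
     \<union> {((a, None), (a, Some x)) | a x. a \<in> fst G \<and> x \<in> fst H}
     \<union> {((a, Some x), (a, None)) | a x. a \<in> fst G \<and> x \<in> fst H})"

text \<open>F + K_1: join with a new vertex None.\<close>
definition join_K1 :: "'a graph \<Rightarrow> 'a option graph" where
  "join_K1 F =
    (insert None (Some ` fst F),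
     {(Some x, Some y) | x y. (x, y) \<in> snd F}
     \<union> {(None, Some x) | x. x \<in> fst F} \<union> {(Some x, None) | x. x \<in> fst F})"

definition induced :: "'a graph \<Rightarrow> 'a set \<Rightarrow> 'a graph" where
  "induced G C = (C, snd G \<inter> (C \<times> C))"

definition components :: "'a graph \<Rightarrow> 'a set set" where
  "components G = {{v \<in> fst G. \<exists>n. walk G u v n} | u. u \<in> fst G}"

end

theory Submission imports Defs begin

text \<open>Take \<open>G = K\<^sub>2\<close> and \<open>H = K\<^sub>1\<close>. Then \<open>G \<odot> H\<close> is the path \<open>P\<^sub>4\<close> and \<open>H + K\<^sub>1 = K\<^sub>2\<close>,
  so the claim reads \<open>\<chi>\<^sub>L(P\<^sub>4) = 2 + (2 - 1)\<close>. Any graph with an edge needs two colours, and an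
  injective colouring is locating, so \<open>\<chi>\<^sub>L(K\<^sub>2) = 2\<close>. In a 2-colouring of \<open>P\<^sub>4 = a b c d\<close> the
  vertices \<open>a\<close> and \<open>c\<close> share a colour and a neighbour, hence their colour codes agree; the
  3-colouring giving \<open>b\<close> and \<open>c\<close> their own colours separates \<open>a\<close> from \<open>d\<close> by their distances
  to \<open>b\<close>.\<close>

lemma walk_snoc: "walk G u w n \<Longrightarrow> (w, v) \<in> snd G \<Longrightarrow> v \<in> fst G \<Longrightarrow> walk G u v (Suc n)"
  by (induction rule: walk.induct) (auto intro: walk.intros)

lemma walk_append: "walk G u w m \<Longrightarrow> walk G w v n \<Longrightarrow> walk G u v (m + n)"
  by (induction rule: walk.induct) (auto intro: walk.intros)

lemma walk_sym:
  assumes "simple_graph G"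
  shows "walk G u v n \<Longrightarrow> walk G v u n"
proof (induction rule: walk.induct)
  case (walk_nil u)
  then show ?case by (rule walk.walk_nil)
next
  case (walk_cons u w v n)
  have "(w, u) \<in> snd G" "u \<in> fst G"
    using walk_cons.hyps(1) assms unfolding simple_graph_def by auto
  then show ?case by (rule walk_snoc[OF walk_cons.IH])
qed

lemma walk_edge: "(u, v) \<in> snd G \<Longrightarrow> v \<in> fst G \<Longrightarrow> walk G u v (Suc 0)"
  by (rule walk_cons[OF _ walk_nil])

lemma walk_0_eq: "walk G u v 0 \<Longrightarrow> u = v"
  by (erule walk.cases) auto

lemma walk_Suc_0_edge: "walk G u v (Suc 0) \<Longrightarrow> (u, v) \<in> snd G"
  by (auto elim: walk.cases)

lemma connected_graphI_root:
  assumes "simple_graph G" "r \<in> fst G" "\<And>v. v \<in> fst G \<Longrightarrow> \<exists>n. walk G r v n"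
  shows "connected_graph G"
  unfolding connected_graph_def
proof (intro conjI ballI)
  show "fst G \<noteq> {}" using assms(2) by auto
  fix u v assume "u \<in> fst G" "v \<in> fst G"
  then obtain m n where "walk G r u m" "walk G r v n" using assms(3) by blast
  then have "walk G u v (m + n)" by (rule walk_append[OF walk_sym[OF assms(1)]])
  then show "\<exists>n. walk G u v n" ..
qed

lemma walk_gdist: "\<exists>n. walk G u v n \<Longrightarrow> walk G u v (gdist G u v)"
  unfolding gdist_def by (rule LeastI_ex)

lemma gdist_le: "walk G u v n \<Longrightarrow> gdist G u v \<le> n"
  unfolding gdist_def by (rule Least_le)

lemma gdist_self: "u \<in> fst G \<Longrightarrow> gdist G u u = 0"
  using gdist_le[OF walk_nil] by simp

lemma gdist_edge_le_1:
  assumes "(u, v) \<in> snd G" "v \<in> fst G"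
  shows "gdist G u v \<le> 1"
  using gdist_le[OF walk_edge[OF assms]] by simp

lemma gdist_neq_0:
  assumes "\<exists>n. walk G u v n" "u \<noteq> v"
  shows "gdist G u v \<noteq> 0"
  using walk_gdist[OF assms(1)] walk_0_eq assms(2) by metis

lemma gdist_ge_2:
  assumes "\<exists>n. walk G u v n" "u \<noteq> v" "(u, v) \<notin> snd G"
  shows "2 \<le> gdist G u v"
proof -
  have "gdist G u v \<noteq> 1"
    using walk_gdist[OF assms(1)] walk_Suc_0_edge assms(3) by (metis One_nat_def)
  with gdist_neq_0[OF assms(1,2)] show ?thesis by linarith
qed

lemma finite_color_class: "simple_graph G \<Longrightarrow> finite (color_class G c i)"
  unfolding simple_graph_def color_class_def by auto

lemma setdist_singleton: "setdist G v {w} = gdist G v w"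
  by (simp add: setdist_def)

lemma setdist_le:
  "simple_graph G \<Longrightarrow> w \<in> color_class G c i \<Longrightarrow> setdist G v (color_class G c i) \<le> gdist G v w"
  unfolding setdist_def by (auto intro: Min_le finite_color_class)

lemma setdist_own_class:
  assumes "simple_graph G" "v \<in> fst G"
  shows "setdist G v (color_class G c (c v)) = 0"
  using setdist_le[OF assms(1), of v c "c v" v] gdist_self[OF assms(2)] assms(2)
  by (simp add: color_class_def)

lemma setdist_other_class_neq_0:
  assumes "simple_graph G" "connected_graph G" "v \<in> fst G" "c v \<noteq> i"
    and "color_class G c i \<noteq> {}"
  shows "setdist G v (color_class G c i) \<noteq> 0"
proof -
  let ?S = "gdist G v ` color_class G c i"
  have "Min ?S \<in> ?S" using finite_color_class[OF assms(1)] assms(5) by (intro Min_in) auto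
  then obtain x where x: "x \<in> color_class G c i" "setdist G v (color_class G c i) = gdist G v x"
    unfolding setdist_def by auto
  then have "x \<in> fst G" "x \<noteq> v" using assms(4) by (auto simp: color_class_def)
  moreover have "\<exists>n. walk G v x n"
    using assms(2,3) \<open>x \<in> fst G\<close> unfolding connected_graph_def by blast
  ultimately show ?thesis using x(2) gdist_neq_0 by metis
qed

lemma setdist_neighbour_class:
  assumes "simple_graph G" "connected_graph G" "(v, w) \<in> snd G" "c v \<noteq> c w"
  shows "setdist G v (color_class G c (c w)) = 1"
proof -
  have vw: "v \<in> fst G" "w \<in> fst G" using assms(1,3) unfolding simple_graph_def by auto
  then have w: "w \<in> color_class G c (c w)" by (simp add: color_class_def)
  have "setdist G v (color_class G c (c w)) \<le> 1"
    using setdist_le[OF assms(1) w, where v = v] gdist_edge_le_1[OF assms(3) vw(2)] by linarith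
  moreover have "setdist G v (color_class G c (c w)) \<noteq> 0"
    using setdist_other_class_neq_0[where c = c, OF assms(1,2) vw(1) assms(4)] w by blast
  ultimately show ?thesis by linarith
qed

lemma color_code_nth: "i < k \<Longrightarrow> color_code G c k v ! i = setdist G v (color_class G c (Suc i))"
  unfolding color_code_def by (simp del: upt_Suc)

lemma color_code_2:
  "color_code G c 2 v = [setdist G v (color_class G c 1), setdist G v (color_class G c 2)]"
  by (simp add: color_code_def upt_conv_Cons numeral_2_eq_2)

lemma color_code_neq_if_color_neq:
  assumes "simple_graph G" "connected_graph G" "k_coloring G c k"
    and "u \<in> fst G" "v \<in> fst G" "c u \<noteq> c v"
  shows "color_code G c k u \<noteq> color_code G c k v"
proof
  assume eq: "color_code G c k u = color_code G c k v"
  have cu: "c u \<in> {1..k}" "color_class G c (c u) \<noteq> {}"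
    using assms(3,4) unfolding k_coloring_def by auto
  then have i: "c u - 1 < k" "Suc (c u - 1) = c u" by auto
  have "color_code G c k u ! (c u - 1) = color_code G c k v ! (c u - 1)" using eq by simp
  then have "setdist G u (color_class G c (c u)) = setdist G v (color_class G c (c u))"
    by (simp only: color_code_nth[OF i(1)] i(2))
  moreover have "setdist G v (color_class G c (c u)) \<noteq> 0"
    using setdist_other_class_neq_0[where c = c, OF assms(1,2,5)] assms(6) cu(2) by simp
  ultimately show False using setdist_own_class[OF assms(1,4)] by simp
qed

lemma locating_coloring_if_inj_on:
  assumes "simple_graph G" "connected_graph G" "k_coloring G c k" "inj_on c (fst G)"
  shows "locating_coloring G c k"
  unfolding locating_coloring_def
proof (intro conjI inj_onI)
  show "k_coloring G c k" by fact
  show "u = v" if uv: "u \<in> fst G" "v \<in> fst G" "color_code G c k u = color_code G c k v" for u v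
  proof (rule ccontr)
    assume "u \<noteq> v"
    then have "c u \<noteq> c v" using inj_onD[OF assms(4) _ uv(1,2)] by blast
    then show False using color_code_neq_if_color_neq[OF assms(1-3) uv(1,2)] uv(3) by blast
  qed
qed

lemma k_coloring_edge_ge_2:
  assumes "k_coloring G c k" "(u, v) \<in> snd G" "u \<in> fst G" "v \<in> fst G"
  shows "2 \<le> k"
proof -
  have "c u \<in> {1..k}" "c v \<in> {1..k}" "c u \<noteq> c v"
    using assms unfolding k_coloring_def by auto
  then show ?thesis by (simp add: atLeastAtMost_iff)
qed

lemma k_coloringI:
  assumes "c ` fst G = {1..k}" "\<And>u v. (u, v) \<in> snd G \<Longrightarrow> c u \<noteq> c v"
  shows "k_coloring G c k"
  unfolding k_coloring_def
proof (intro conjI ballI allI impI)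
  show "c v \<in> {1..k}" if "v \<in> fst G" for v
    using imageI[OF that, of c] by (simp only: assms(1))
  show "c u \<noteq> c v" if "(u, v) \<in> snd G" for u v by (rule assms(2)[OF that])
  show "color_class G c i \<noteq> {}" if "i \<in> {1..k}" for i
  proof -
    have "i \<in> c ` fst G" using that by (simp only: assms(1))
    then obtain v where "v \<in> fst G" "c v = i" by blast
    then show ?thesis by (auto simp: color_class_def)
  qed
qed

text \<open>With only two colours, a vertex at distance 1 from some class lies in the class of each
  of its neighbours; so two vertices with a common neighbour cannot be told apart.\<close>
lemma color_code_eq_common_neighbour:
  assumes "simple_graph G" "connected_graph G" "k_coloring G c 2"
    and "(u, v) \<in> snd G" "(w, v) \<in> snd G"
  shows "color_code G c 2 u = color_code G c 2 w"
proof -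
  have V: "u \<in> fst G" "v \<in> fst G" "w \<in> fst G"
    using assms(1,4,5) unfolding simple_graph_def by auto
  have col: "c u \<in> {1, 2}" "c v \<in> {1, 2}" "c u \<noteq> c v" "c w \<noteq> c v"
    using assms(3-5) V unfolding k_coloring_def by auto
  then have same: "c u = c w"
    using assms(3) V(3) unfolding k_coloring_def by auto
  have eq: "setdist G u (color_class G c i) = setdist G w (color_class G c i)" if i: "i \<in> {1, 2}" for i
  proof -
    consider "i = c u" | "i = c v" using i col by auto
    then show ?thesis
    proof cases
      case 1
      then show ?thesis using setdist_own_class[OF assms(1)] V same by metis
    next
      case 2
      then show ?thesis
        using setdist_neighbour_class[OF assms(1,2,4) col(3)]
          setdist_neighbour_class[OF assms(1,2,5) col(4)] by simp
    qed
  qed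
  show ?thesis unfolding color_code_2 using eq[of 1] eq[of 2] by simp
qed

lemma locating_chromatic_number_eqI:
  assumes "locating_coloring G c m" "\<And>k c. k < m \<Longrightarrow> \<not> locating_coloring G c k"
  shows "locating_chromatic_number G = m"
  unfolding locating_chromatic_number_def
proof (rule Least_equality)
  show "\<exists>c. locating_coloring G c m" using assms(1) by blast
  show "m \<le> k" if "\<exists>c. locating_coloring G c k" for k
    using that assms(2)[of k] by (meson not_le)
qed

definition edge_graph :: "'a \<Rightarrow> 'a \<Rightarrow> 'a graph" where
  "edge_graph a b = ({a, b}, {(a, b), (b, a)})"

lemma simple_graph_edge_graph: "a \<noteq> b \<Longrightarrow> simple_graph (edge_graph a b)"
  unfolding simple_graph_def edge_graph_def by auto

lemma connected_graph_edge_graph: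
  assumes "a \<noteq> b"
  shows "connected_graph (edge_graph a b)"
proof (rule connected_graphI_root[OF simple_graph_edge_graph[OF assms], of a])
  have "walk (edge_graph a b) a a 0" by (rule walk_nil) (simp add: edge_graph_def)
  moreover have "walk (edge_graph a b) a b (Suc 0)"
    by (rule walk_edge) (simp_all add: edge_graph_def)
  moreover have "v = a \<or> v = b" if "v \<in> fst (edge_graph a b)" for v
    using that by (simp add: edge_graph_def)
  ultimately show "\<exists>n. walk (edge_graph a b) a v n" if "v \<in> fst (edge_graph a b)" for v
    using that by blast
qed (simp add: edge_graph_def)

lemma locating_chromatic_number_edge_graph:
  assumes "a \<noteq> b"
  shows "locating_chromatic_number (edge_graph a b) = 2"
proof (rule locating_chromatic_number_eqI)
  let ?K = "edge_graph a b" and ?c = "\<lambda>v. if v = a then 1 else 2 :: nat"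
  have "{1..2 :: nat} = {1, 2}" by auto
  then have "?c ` fst ?K = {1..2}" using assms by (simp add: edge_graph_def insert_commute)
  then have "k_coloring ?K ?c 2"
    by (rule k_coloringI) (use assms in \<open>auto simp: edge_graph_def\<close>)
  moreover have "inj_on ?c (fst ?K)"
    using assms by (simp add: edge_graph_def)
  ultimately show "locating_coloring ?K ?c 2"
    by (rule locating_coloring_if_inj_on[OF simple_graph_edge_graph[OF assms]
          connected_graph_edge_graph[OF assms]])
  show "\<not> locating_coloring ?K c k" if "k < 2" for k c
  proof
    assume "locating_coloring ?K c k"
    then have "k_coloring ?K c k" by (simp add: locating_coloring_def)
    then have "2 \<le> k" by (rule k_coloring_edge_ge_2[of _ _ _ a b]) (simp_all add: edge_graph_def)
    with that show False by simp
  qed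
qed

definition path4_graph :: "'a \<Rightarrow> 'a \<Rightarrow> 'a \<Rightarrow> 'a \<Rightarrow> 'a graph" where
  "path4_graph a b c d = ({a, b, c, d}, {(a, b), (b, a), (b, c), (c, b), (c, d), (d, c)})"

lemma simple_graph_path4_graph:
  "distinct [a, b, c, d] \<Longrightarrow> simple_graph (path4_graph a b c d)"
  unfolding simple_graph_def path4_graph_def by auto

lemma connected_graph_path4_graph:
  assumes "distinct [a, b, c, d]"
  shows "connected_graph (path4_graph a b c d)"
proof (rule connected_graphI_root[OF simple_graph_path4_graph[OF assms], of a])
  let ?P = "path4_graph a b c d"
  have "walk ?P a a 0" by (rule walk_nil) (simp add: path4_graph_def)
  moreover have ab: "walk ?P a b (Suc 0)" by (rule walk_edge) (simp_all add: path4_graph_def)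
  moreover have ac: "walk ?P a c (Suc (Suc 0))"
    by (rule walk_snoc[OF ab]) (simp_all add: path4_graph_def)
  moreover have "walk ?P a d (Suc (Suc (Suc 0)))"
    by (rule walk_snoc[OF ac]) (simp_all add: path4_graph_def)
  ultimately show "\<exists>n. walk ?P a v n" if "v \<in> fst ?P" for v
    using that by (auto simp: path4_graph_def)
qed (simp add: path4_graph_def)

lemma locating_chromatic_number_path4_graph:
  assumes "distinct [a, b, c, d]"
  shows "locating_chromatic_number (path4_graph a b c d) = 3"
proof (rule locating_chromatic_number_eqI)
  let ?P = "path4_graph a b c d"
  let ?col = "\<lambda>v. if v = b then 2 else if v = c then 3 else 1 :: nat"
  note simple = simple_graph_path4_graph[OF assms]
   and conn = connected_graph_path4_graph[OF assms]
  have "{1..3 :: nat} = {1, 2, 3}" by auto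
  then have kc: "k_coloring ?P ?col 3"
    using assms by (intro k_coloringI) (auto simp: path4_graph_def)
  have ad: "color_code ?P ?col 3 a \<noteq> color_code ?P ?col 3 d"
  proof
    assume "color_code ?P ?col 3 a = color_code ?P ?col 3 d"
    then have "color_code ?P ?col 3 a ! 1 = color_code ?P ?col 3 d ! 1" by simp
    then have "setdist ?P a (color_class ?P ?col 2) = setdist ?P d (color_class ?P ?col 2)"
      using color_code_nth[of 1 3 ?P ?col] by (simp add: numeral_2_eq_2)
    moreover have "color_class ?P ?col 2 = {b}"
      using assms by (auto simp: color_class_def path4_graph_def)
    ultimately have "gdist ?P a b = gdist ?P d b" by (simp add: setdist_singleton)
    moreover have "gdist ?P a b \<le> 1"
      by (rule gdist_edge_le_1) (auto simp: path4_graph_def)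
    moreover have "2 \<le> gdist ?P d b"
    proof (rule gdist_ge_2)
      have "d \<in> fst ?P" "b \<in> fst ?P" by (simp_all add: path4_graph_def)
      then show "\<exists>n. walk ?P d b n" using conn unfolding connected_graph_def by blast
      show "d \<noteq> b" "(d, b) \<notin> snd ?P" using assms by (auto simp: path4_graph_def)
    qed
    ultimately show False by linarith
  qed
  have "inj_on (color_code ?P ?col 3) (fst ?P)"
  proof (rule inj_onI)
    fix u v
    assume uv: "u \<in> fst ?P" "v \<in> fst ?P" and eq: "color_code ?P ?col 3 u = color_code ?P ?col 3 v"
    then have "?col u = ?col v" using color_code_neq_if_color_neq[OF simple conn kc] by blast
    then have "u = v \<or> (u = a \<and> v = d) \<or> (u = d \<and> v = a)"
      using uv assms by (auto simp: path4_graph_def split: if_splits)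
    then show "u = v" using eq ad by auto
  qed
  with kc show "locating_coloring ?P ?col 3" by (simp add: locating_coloring_def)
  show "\<not> locating_coloring ?P col k" if "k < 3" for k col
  proof
    assume "locating_coloring ?P col k"
    then have kc: "k_coloring ?P col k" and inj: "inj_on (color_code ?P col k) (fst ?P)"
      unfolding locating_coloring_def by simp_all
    have "2 \<le> k" by (rule k_coloring_edge_ge_2[OF kc, of a b]) (simp_all add: path4_graph_def)
    with that have k: "k = 2" by simp
    have "color_code ?P col k a = color_code ?P col k c"
      unfolding k by (rule color_code_eq_common_neighbour[OF simple conn kc[unfolded k], where v = b])
        (simp_all add: path4_graph_def)
    moreover have "a \<in> fst ?P" "c \<in> fst ?P" by (simp_all add: path4_graph_def)
    ultimately have "a = c" by (rule inj_onD[OF inj])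
    then show False using assms by simp
  qed
qed

lemma corona_edge_graph_K1:
  "corona (edge_graph a b) ({x}, {}) =
     path4_graph (a, Some x) (a, None) (b, None) (b, Some x)"
  unfolding corona_def edge_graph_def path4_graph_def by auto

lemma components_K1: "components ({x}, {}) = {{x}}"
  unfolding components_def using walk_nil[of x "({x}, {})"] by auto

lemma join_K1_K1: "join_K1 (induced ({x}, {}) {x}) = edge_graph None (Some x)"
  unfolding join_K1_def induced_def edge_graph_def by auto

theorem theorem3:
  shows "\<exists>(G :: nat graph) (H :: nat graph).
     simple_graph G \<and> connected_graph G \<and> card (fst G) \<ge> 2 \<and>
     simple_graph H \<and> fst H \<noteq> {} \<and>
     locating_chromatic_number (corona G H) =
       locating_chromatic_number G +
       (\<Sum>C\<in>components H. locating_chromatic_number (join_K1 (induced H C)) - 1)"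
proof -
  let ?G = "edge_graph (0 :: nat) 1" and ?H = "({0 :: nat}, {} :: (nat \<times> nat) set)"
  show ?thesis
  proof (rule exI[of _ ?G], rule exI[of _ ?H], intro conjI)
    show "simple_graph ?G" "connected_graph ?G"
      by (simp_all add: simple_graph_edge_graph connected_graph_edge_graph)
    show "card (fst ?G) \<ge> 2" by (simp add: edge_graph_def)
    show "simple_graph ?H" by (simp add: simple_graph_def)
    show "fst ?H \<noteq> {}" by simp
    show "locating_chromatic_number (corona ?G ?H) =
        locating_chromatic_number ?G +
        (\<Sum>C\<in>components ?H. locating_chromatic_number (join_K1 (induced ?H C)) - 1)"
      by (simp add: corona_edge_graph_K1 locating_chromatic_number_path4_graph
          locating_chromatic_number_edge_graph components_K1 join_K1_K1)
  qed
qed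

end
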